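(* For all $0<p,q,r\le\infty$ and $\beta\in\mathbb{R}$, the space $X=T^{p,r}_{q,\beta}$ has the Fatou property: if $0\le f_k\in X$ for $k\in\mathbb{N}$, $\sup_k\|f_k\|_X<\infty$, and $f_k\uparrow f$ a.e. for a measurable $f$, then $f\in X$ and $\|f\|_X=\lim_{k\to\infty}\|f_k\|_X$.
   Context: Let $\mathbb{R}^{n+1}_+=\mathbb{R}^n\times(0,\infty)$; functions are complex-valued measurable, identified a.e. $B(y,t)=\{z:|z-y|<t\}$, $\Gamma(x)=\{(y,t):|y-x|<t\}$, $\widehat{B}=\{(y,t):B(y,t)\subset B\}$ for an open ball $B\subset\mathbb{R}^n$. Fix Whitney parameters $0<\alpha_1<\alpha_2^{-1}<1$, $W(y,t)=\{(z,s):|z-y|<\alpha_1t,\ \alpha_2^{-1}t<s<\alpha_2t\}$, $\mathcal{W}_r(f)(y,t)=|W(y,t)|^{-1/r}\|f\|_{L^r(W(y,t))}$ ($r<\infty$), $\mathcal{W}_\infty(f)(y,t)=\operatorname{ess\,sup}_{W(y,t)}|f|$. Tent spaces $T^p_q$: (A) $p,q<\infty$: $\|g\|=\|(\iint_{\Gamma(x)}|g|^q\,dy\,dt/t^{n+1})^{1/q}\|_{L^p(dx)}$; (B) $q<p=\infty$: $\|g\|=\sup_x\sup_{B\ni x}|B|^{-1/q}(\iint_{\widehat B}|g|^q\,dy\,dt/t)^{1/q}$; (C) $p<q=\infty$: $\|g\|=\|\sup_{(y,t)\in\Gamma(x)}|g(y,t)|\|_{L^p(dx)}$; (D) $T^\infty_\infty=L^\infty$.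 $T^{p,r}_{q,\beta}$ is the space of $f$ with $\|f\|_{T^{p,r}_{q,\beta}}=\|\mathcal{W}_r(f(z,s)s^{-\beta})\|_{T^p_q}<\infty$. *)

theory Defs
  imports "HOL-Analysis.Analysis"
begin

definition epow :: "ennreal \<Rightarrow> real \<Rightarrow> ennreal" where
  "epow x a =
     (if a = 0 then 1
      else if x = \<infinity> then (if a > 0 then \<infinity> else 0)
      else if x = 0 then (if a > 0 then 0 else \<infinity>)
      else ennreal (enn2real x powr a))"

definition upper_half :: "('a::euclidean_space \<times> real) set" where
  "upper_half = {z. 0 < snd z}"

definition cone :: "'a::euclidean_space \<Rightarrow> ('a \<times> real) set" where
  "cone x = {(y, t). 0 < t \<and> dist y x < t}"

definition tent :: "'a::euclidean_space \<Rightarrow> real \<Rightarrow> ('a \<times> real) set" where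
  "tent c \<rho> = {(y, t). 0 < t \<and> ball y t \<subseteq> ball c \<rho>}"

definition whitney :: "real \<Rightarrow> real \<Rightarrow> 'a::euclidean_space \<times> real \<Rightarrow> ('a \<times> real) set" where
  "whitney \<alpha>1 \<alpha>2 w = (case w of (y, t) \<Rightarrow>
     {(z, s). dist z y < \<alpha>1 * t \<and> t / \<alpha>2 < s \<and> s < \<alpha>2 * t})"

definition esssup_on :: "('a::euclidean_space) set \<Rightarrow> ('a \<Rightarrow> ennreal) \<Rightarrow> ennreal" where
  "esssup_on S g = Inf {c. AE z in lebesgue. z \<in> S \<longrightarrow> g z \<le> c}"

definition whitney_avg ::
  "real \<Rightarrow> real \<Rightarrow> ennreal \<Rightarrow> ('a::euclidean_space \<times> real \<Rightarrow> ennreal) \<Rightarrow> 'a \<times> real \<Rightarrow> ennreal" where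
  "whitney_avg \<alpha>1 \<alpha>2 r g w =
     (if r = \<infinity> then esssup_on (whitney \<alpha>1 \<alpha>2 w) g
      else epow (emeasure lebesgue (whitney \<alpha>1 \<alpha>2 w)) (- 1 / enn2real r)
         * epow (\<integral>\<^sup>+ z. indicator (whitney \<alpha>1 \<alpha>2 w) z * epow (g z) (enn2real r) \<partial>lebesgue)
                (1 / enn2real r))"

definition tent_norm :: "ennreal \<Rightarrow> ennreal \<Rightarrow> ('a::euclidean_space \<times> real \<Rightarrow> ennreal) \<Rightarrow> ennreal" where
  "tent_norm p q g =
     (if p \<noteq> \<infinity> \<and> q \<noteq> \<infinity> then
        epow (\<integral>\<^sup>+ x. epow (\<integral>\<^sup>+ z. indicator (cone x) z * epow (g z) (enn2real q)
                 * ennreal (1 / snd z ^ (DIM('a) + 1)) \<partial>lebesgue) (enn2real p / enn2real q) \<partial>lebesgue)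
             (1 / enn2real p)
      else if p = \<infinity> \<and> q \<noteq> \<infinity> then
        (SUP x. SUP c. SUP \<rho> \<in> {\<rho>. 0 < \<rho> \<and> x \<in> ball c \<rho>}.
           epow (emeasure lebesgue (ball c \<rho>)) (- 1 / enn2real q)
           * epow (\<integral>\<^sup>+ z. indicator (tent c \<rho>) z * epow (g z) (enn2real q)
                    * ennreal (1 / snd z) \<partial>lebesgue) (1 / enn2real q))
      else if p \<noteq> \<infinity> \<and> q = \<infinity> then
        epow (\<integral>\<^sup>+ x. epow (SUP z \<in> cone x. g z) (enn2real p) \<partial>lebesgue) (1 / enn2real p)
      else esssup_on upper_half g)"

definition tpr_norm ::
  "real \<Rightarrow> real \<Rightarrow> ennreal \<Rightarrow> ennreal \<Rightarrow> ennreal \<Rightarrow> real \<Rightarrow> ('a::euclidean_space \<times> real \<Rightarrow> complex) \<Rightarrow> ennreal" where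
  "tpr_norm \<alpha>1 \<alpha>2 p q r \<beta> f =
     tent_norm p q (whitney_avg \<alpha>1 \<alpha>2 r (\<lambda>(z, s). ennreal (cmod (f (z, s)) * s powr (- \<beta>))))"

definition tpr_space ::
  "real \<Rightarrow> real \<Rightarrow> ennreal \<Rightarrow> ennreal \<Rightarrow> ennreal \<Rightarrow> real \<Rightarrow> ('a::euclidean_space \<times> real \<Rightarrow> complex) set" where
  "tpr_space \<alpha>1 \<alpha>2 p q r \<beta> =
     {f. f \<in> borel_measurable lebesgue \<and> tpr_norm \<alpha>1 \<alpha>2 p q r \<beta> f < \<infinity>}"

end

theory Submission
  imports Defs
begin

text \<open>Every ingredient of the quasi-norm is a monotone operation that commutes with suprema of
  increasing sequences: real powers with positive exponent (order isomorphisms of ennreal), Lebesgue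
  integrals (monotone convergence), essential and pointwise suprema, and suprema over balls. Hence the
  norm of the a.e. increasing limit of the weighted moduli is the supremum of the norms of the
  approximants, which is finite by hypothesis.\<close>

lemma epow_mono:
  assumes "0 < a" "x \<le> y" shows "epow x a \<le> epow y a"
proof -
  consider "y = \<infinity>" | "x = 0" | "x \<noteq> 0" "y \<noteq> \<infinity>" by blast
  then show ?thesis
  proof cases
    case 3
    then have "x \<noteq> \<infinity>" "y \<noteq> 0"
      using assms top.extremum_unique by (fastforce, metis bot.extremum_uniqueI bot_ennreal)
    moreover have "enn2real x \<le> enn2real y"
      using assms(2) 3 by (simp add: enn2real_mono top.not_eq_extremum)
    ultimately show ?thesis using 3 assms
      by (auto simp: epow_def intro!: ennreal_leI powr_mono2)
  qed (use assms in \<open>auto simp: epow_def\<close>)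
qed

lemma epow_epow_inverse:
  assumes "0 < a" shows "epow (epow x a) (1 / a) = x"
proof -
  consider "x = \<infinity>" | "x = 0" | "x \<noteq> 0" "x \<noteq> \<infinity>" by blast
  then show ?thesis
  proof cases
    case 3
    then have "0 < enn2real x"
      by (simp add: enn2real_positive_iff top.not_eq_extremum zero_less_iff_neq_zero)
    then show ?thesis using 3 assms
      by (auto simp: epow_def powr_powr enn2real_eq_0_iff ennreal_enn2real_if)
  qed (use assms in \<open>auto simp: epow_def\<close>)
qed

lemma mono_inverse_Sup_image:
  fixes f :: "'a::complete_lattice \<Rightarrow> 'b::complete_lattice" and g :: "'b \<Rightarrow> 'a"
  assumes "mono f" "mono g" "\<And>x. g (f x) = x" "\<And>y. f (g y) = y"
  shows "f (Sup S) = Sup (f ` S)"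
proof (rule antisym)
  show "Sup (f ` S) \<le> f (Sup S)" using assms(1) by (simp add: SUP_least Sup_upper monoD)
  have "Sup S \<le> g (Sup (f ` S))"
    by (metis Sup_least Sup_upper assms(2,3) image_eqI monoD)
  then show "f (Sup S) \<le> Sup (f ` S)" using assms by (metis monoD)
qed

lemma epow_SUP:
  assumes "0 < a" shows "epow (SUP i\<in>I. X i) a = (SUP i\<in>I. epow (X i) a)"
proof -
  have "epow (Sup (X ` I)) a = Sup ((\<lambda>x. epow x a) ` X ` I)"
  proof (rule mono_inverse_Sup_image[where g = "\<lambda>x. epow x (1 / a)"])
    show "mono (\<lambda>x. epow x a)" "mono (\<lambda>x. epow x (1 / a))"
      using assms epow_mono by (auto simp: mono_def)
    show "epow (epow x a) (1 / a) = x" for x using assms by (rule epow_epow_inverse)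
    show "epow (epow y (1 / a)) a = y" for y using epow_epow_inverse[of "1 / a" y] assms by simp
  qed
  then show ?thesis by (simp add: image_comp)
qed

lemma epow_measurable[measurable]:
  assumes [measurable]: "F \<in> borel_measurable M"
  shows "(\<lambda>w. epow (F w) a) \<in> borel_measurable M"
  unfolding epow_def by measurable

lemma nn_integral_epow_SUP:
  fixes G :: "nat \<Rightarrow> 'a \<Rightarrow> ennreal"
  assumes inc: "incseq G" and G: "\<And>k. G k \<in> borel_measurable M"
    and w: "w \<in> borel_measurable M" and a: "0 < a"
  shows "(\<integral>\<^sup>+ x. w x * epow (SUP k. G k x) a \<partial>M) = (SUP k. \<integral>\<^sup>+ x. w x * epow (G k x) a \<partial>M)"
proof -
  have "(\<integral>\<^sup>+ x. w x * epow (SUP k. G k x) a \<partial>M) = (\<integral>\<^sup>+ x. (SUP k. w x * epow (G k x) a) \<partial>M)"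
    by (simp add: epow_SUP[OF a] SUP_mult_left_ennreal image_comp)
  also have "\<dots> = (SUP k. \<integral>\<^sup>+ x. w x * epow (G k x) a \<partial>M)"
  proof (rule nn_integral_monotone_convergence_SUP)
    show "incseq (\<lambda>k x. w x * epow (G k x) a)"
      using inc by (auto simp: incseq_def le_fun_def intro!: mult_left_mono epow_mono[OF a])
    show "(\<lambda>x. w x * epow (G k x) a) \<in> borel_measurable M" for k
      using G[of k] w by measurable
  qed
  finally show ?thesis .
qed

lemma esssup_on_AE: "AE z in lebesgue. z \<in> S \<longrightarrow> g z \<le> esssup_on S g"
proof -
  let ?C = "{c. AE z in lebesgue. z \<in> S \<longrightarrow> g z \<le> c}"
  have "top \<in> ?C" by simp
  then obtain u where u: "\<And>n. u n \<in> ?C" "u \<longlonglongrightarrow> Inf ?C"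
    using Inf_as_limit[of ?C] by blast
  have "AE z in lebesgue. \<forall>n. z \<in> S \<longrightarrow> g z \<le> u n"
    using u(1) by (subst AE_all_countable) simp
  then show ?thesis unfolding esssup_on_def
    by eventually_elim (auto intro: LIMSEQ_le_const[OF u(2)])
qed

lemma esssup_on_mono_AE:
  assumes "AE z in lebesgue. z \<in> S \<longrightarrow> h z \<le> g z"
  shows "esssup_on S h \<le> esssup_on S g"
  unfolding esssup_on_def
proof (rule Inf_superset_mono, rule subsetI)
  fix c assume "c \<in> {c. AE z in lebesgue. z \<in> S \<longrightarrow> g z \<le> c}"
  with assms have "AE z in lebesgue. z \<in> S \<longrightarrow> h z \<le> c"
    by (auto elim: eventually_mono[OF eventually_conj] intro: order_trans)
  then show "c \<in> {c. AE z in lebesgue. z \<in> S \<longrightarrow> h z \<le> c}" by simp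
qed

lemma esssup_on_SUP:
  fixes gk :: "nat \<Rightarrow> 'a::euclidean_space \<Rightarrow> ennreal"
  assumes "AE z in lebesgue. z \<in> S \<longrightarrow> g z = (SUP k. gk k z)"
  shows "esssup_on S g = (SUP k. esssup_on S (gk k))"
proof (rule antisym)
  have "AE z in lebesgue. \<forall>k. z \<in> S \<longrightarrow> gk k z \<le> esssup_on S (gk k)"
    by (subst AE_all_countable) (blast intro: esssup_on_AE)
  with assms have "AE z in lebesgue. z \<in> S \<longrightarrow> g z \<le> (SUP k. esssup_on S (gk k))"
    by eventually_elim (auto intro!: SUP_mono)
  then show "esssup_on S g \<le> (SUP k. esssup_on S (gk k))"
    unfolding esssup_on_def by (intro Inf_lower) simp
  show "(SUP k. esssup_on S (gk k)) \<le> esssup_on S g"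
  proof (rule SUP_least, rule esssup_on_mono_AE)
    show "AE z in lebesgue. z \<in> S \<longrightarrow> gk k z \<le> g z" for k
      using assms by eventually_elim (auto intro: SUP_upper)
  qed
qed

lemma esssup_on_AE_cong:
  assumes "AE z in lebesgue. g z = h z"
  shows "esssup_on S g = esssup_on S h"
  by (rule antisym; rule esssup_on_mono_AE) (use assms in \<open>auto elim: eventually_mono\<close>)

lemma less_esssup_on_iff:
  assumes g: "g \<in> borel_measurable lebesgue" and S: "S \<in> sets lebesgue"
  shows "c < esssup_on S g \<longleftrightarrow> 0 < (\<integral>\<^sup>+ z. indicator S z * indicator {z. c < g z} z \<partial>lebesgue)"
proof -
  have "esssup_on S g \<le> c \<longleftrightarrow> (AE z in lebesgue. z \<in> S \<longrightarrow> g z \<le> c)"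
  proof
    assume le: "esssup_on S g \<le> c"
    show "AE z in lebesgue. z \<in> S \<longrightarrow> g z \<le> c"
      using esssup_on_AE[of S g] by eventually_elim (use le in \<open>auto intro: order_trans\<close>)
  qed (unfold esssup_on_def, intro Inf_lower, simp)
  also have "\<dots> \<longleftrightarrow> (AE z in lebesgue. indicator S z * indicator {z. c < g z} z = (0::ennreal))"
    by (intro AE_cong) (auto simp: indicator_def not_less)
  also have "\<dots> \<longleftrightarrow> (\<integral>\<^sup>+ z. indicator S z * indicator {z. c < g z} z \<partial>lebesgue) = 0"
    by (subst nn_integral_0_iff_AE) (use g S in measurable)
  finally show ?thesis by (simp add: zero_less_iff_neq_zero not_le[symmetric])
qed

lemma borel_measurable_imp_lebesgue:
  fixes f :: "'a::euclidean_space \<Rightarrow> 'b::topological_space"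
  shows "f \<in> borel_measurable borel \<Longrightarrow> f \<in> borel_measurable lebesgue"
  using measurable_completion[of f lborel borel] by (simp only: measurable_lborel2)

lemma sets_borel_imp_lebesgue: "S \<in> sets borel \<Longrightarrow> S \<in> sets (lebesgue :: 'a::euclidean_space measure)"
  by (metis sets_completionI_sets sets_lborel)

lemma snd_borel[measurable]: "(snd :: 'a::euclidean_space \<times> real \<Rightarrow> real) \<in> borel_measurable borel"
  by (intro borel_measurable_continuous_onI continuous_intros)

lemma borel_measurable_nn_integral_section:
  fixes h :: "'c::euclidean_space \<Rightarrow> ennreal" and J :: "('b::euclidean_space \<times> 'c) set"
  assumes J[measurable]: "J \<in> sets borel" and h: "h \<in> borel_measurable borel"
  shows "(\<lambda>x. \<integral>\<^sup>+ z. indicator J (x, z) * h z \<partial>lebesgue) \<in> borel_measurable borel"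
proof -
  have sp: "sets (lborel \<Otimes>\<^sub>M lborel) = sets (borel :: ('b \<times> 'c) measure)"
    by (metis lborel_prod sets_lborel)
  have "snd \<in> borel_measurable (borel :: ('b \<times> 'c) measure)"
    by (intro borel_measurable_continuous_onI continuous_intros)
  then have "(\<lambda>p. h (snd p)) \<in> borel_measurable (borel :: ('b \<times> 'c) measure)"
    using measurable_compose[OF _ h] by blast
  then have "(\<lambda>p. indicator J p * h (snd p)) \<in> borel_measurable (lborel \<Otimes>\<^sub>M lborel)"
    by (subst measurable_cong_sets[OF sp refl]) measurable
  moreover have "(\<lambda>p. indicator J p * h (snd p)) = case_prod (\<lambda>x z. indicator J (x, z) * h z)"
    by (auto simp: fun_eq_iff)
  ultimately have "(\<lambda>x. \<integral>\<^sup>+ z. indicator J (x, z) * h z \<partial>lborel) \<in> borel_measurable lborel"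
    by (intro lborel.borel_measurable_nn_integral) simp
  then show ?thesis by (simp add: nn_integral_completion)
qed

lemma open_whitney: "open (whitney \<alpha>1 \<alpha>2 w)"
proof -
  obtain y t where w: "w = (y, t)" by force
  have "whitney \<alpha>1 \<alpha>2 w =
    {p. dist (fst p) y < \<alpha>1 * t} \<inter> {p. t / \<alpha>2 < snd p} \<inter> {p. snd p < \<alpha>2 * t}"
    by (auto simp: whitney_def w)
  also have "open \<dots>"
    by (intro open_Int open_Collect_less continuous_intros)
  finally show ?thesis .
qed

lemma whitney_sets[measurable]: "whitney \<alpha>1 \<alpha>2 w \<in> sets lebesgue"
  by (intro sets_borel_imp_lebesgue borel_open open_whitney)

lemma open_whitney_graph:
  "open {(w, z :: 'a::euclidean_space \<times> real). z \<in> whitney \<alpha>1 \<alpha>2 w}"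
proof -
  have "{(w, z :: 'a \<times> real). z \<in> whitney \<alpha>1 \<alpha>2 w} =
    {p. dist (fst (snd p)) (fst (fst p)) < \<alpha>1 * snd (fst p)} \<inter>
    {p. snd (fst p) * (1 / \<alpha>2) < snd (snd p)} \<inter> {p. snd (snd p) < \<alpha>2 * snd (fst p)}"
    by (auto simp: whitney_def split: prod.splits)
  also have "open \<dots>"
    by (intro open_Int open_Collect_less continuous_intros)
  finally show ?thesis .
qed

lemma whitney_subset_upper_half:
  assumes "0 < \<alpha>1" "0 < \<alpha>2" shows "whitney \<alpha>1 \<alpha>2 w \<subseteq> upper_half"
proof
  fix z assume z: "z \<in> whitney \<alpha>1 \<alpha>2 w"
  obtain y t where w: "w = (y, t)" by force
  have "0 \<le> dist (fst z) y" by simp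
  also have "dist (fst z) y < \<alpha>1 * t" using z by (auto simp: whitney_def w)
  finally have "0 < t" using assms by (simp add: zero_less_mult_iff)
  then show "z \<in> upper_half"
    using z assms by (auto simp: whitney_def w upper_half_def intro: less_trans[rotated])
qed

lemma tent_borel: "tent c \<rho> \<in> sets borel"
proof -
  have "tent c \<rho> = {z. 0 < snd z} \<inter> {z. dist (fst z) c + snd z \<le> \<rho>}"
    by (auto simp: tent_def ball_subset_ball_iff)
  also have "\<dots> \<in> sets borel"
    by (intro sets.Int borel_open borel_closed open_Collect_less closed_Collect_le continuous_intros)
  finally show ?thesis .
qed

lemma cone_borel: "cone x \<in> sets borel"
proof -
  have "cone x = {p. 0 < snd p} \<inter> {p. dist (fst p) x < snd p}"
    by (auto simp: cone_def)
  also have "\<dots> \<in> sets borel"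
    by (intro sets.Int borel_open open_Collect_less continuous_intros)
  finally show ?thesis .
qed

lemma cone_graph_borel: "{(x, z :: 'a::euclidean_space \<times> real). z \<in> cone x} \<in> sets borel"
proof -
  have "{(x, z :: 'a \<times> real). z \<in> cone x} =
     {p. 0 < snd (snd p)} \<inter> {p. dist (fst (snd p)) (fst p) < snd (snd p)}"
    by (auto simp: cone_def split: prod.splits)
  also have "\<dots> \<in> sets borel"
    by (intro sets.Int borel_open open_Collect_less continuous_intros)
  finally show ?thesis .
qed

lemma borel_measurable_SUP_cone:
  fixes H :: "'a::euclidean_space \<times> real \<Rightarrow> ennreal"
  shows "(\<lambda>x. SUP z\<in>cone x. H z) \<in> borel_measurable borel"
proof (rule borel_measurableI_greater)
  fix c
  have "{x \<in> space borel. c < (SUP z\<in>cone x. H z)} = (\<Union>z\<in>{z. c < H z}. {x. z \<in> cone x})"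
    by (auto simp: less_SUP_iff)
  also have "open \<dots>"
  proof (intro open_UN ballI)
    fix z :: "'a \<times> real"
    obtain y t where z: "z = (y, t)" by force
    have "{x. z \<in> cone x} = (if 0 < t then ball y t else {})"
      by (auto simp: cone_def z dist_commute)
    then show "open {x. z \<in> cone x}" by simp
  qed
  finally show "{x \<in> space borel. c < (SUP z\<in>cone x. H z)} \<in> sets borel" by (rule borel_open)
qed

lemma borel_measurable_whitney_integral:
  fixes h :: "'a::euclidean_space \<times> real \<Rightarrow> ennreal"
  assumes "h \<in> borel_measurable borel"
  shows "(\<lambda>w. \<integral>\<^sup>+ z. indicator (whitney \<alpha>1 \<alpha>2 w) z * h z \<partial>lebesgue) \<in> borel_measurable borel"
  using borel_measurable_nn_integral_section[OF borel_open[OF open_whitney_graph] assms]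
  by (simp add: indicator_def)

lemma whitney_avg_AE_cong:
  assumes "AE z in lebesgue. g z = h z"
  shows "whitney_avg \<alpha>1 \<alpha>2 r g = whitney_avg \<alpha>1 \<alpha>2 r h"
proof -
  have "(\<integral>\<^sup>+ z. indicator S z * epow (g z) a \<partial>lebesgue) = (\<integral>\<^sup>+ z. indicator S z * epow (h z) a \<partial>lebesgue)"
    for S a by (rule nn_integral_cong_AE) (use assms in \<open>auto elim: eventually_mono\<close>)
  then show ?thesis
    using esssup_on_AE_cong[OF assms] by (simp add: whitney_avg_def fun_eq_iff)
qed

lemma whitney_avg_borel_measurable_borel:
  fixes g :: "'a::euclidean_space \<times> real \<Rightarrow> ennreal"
  assumes g[measurable]: "g \<in> borel_measurable borel"
  shows "whitney_avg \<alpha>1 \<alpha>2 r g \<in> borel_measurable borel"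
proof (cases "r = \<infinity>")
  case True
  show ?thesis
  proof (rule borel_measurableI_greater)
    fix c
    have "(\<lambda>w. \<integral>\<^sup>+ z. indicator (whitney \<alpha>1 \<alpha>2 w) z * indicator {z. c < g z} z \<partial>lebesgue)
       \<in> borel_measurable borel" by (rule borel_measurable_whitney_integral) measurable
    then have "{w \<in> space borel. 0 < (\<integral>\<^sup>+ z. indicator (whitney \<alpha>1 \<alpha>2 w) z
        * indicator {z. c < g z} z \<partial>lebesgue)} \<in> sets borel" by measurable
    then show "{w \<in> space borel. c < whitney_avg \<alpha>1 \<alpha>2 r g w} \<in> sets borel"
      using True borel_measurable_imp_lebesgue[OF g]
      by (simp add: whitney_avg_def less_esssup_on_iff)
  qed
next
  case False
  have [measurable]: "(\<lambda>w. \<integral>\<^sup>+ z. indicator (whitney \<alpha>1 \<alpha>2 w) z * epow (g z) (enn2real r) \<partial>lebesgue)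
       \<in> borel_measurable borel" by (rule borel_measurable_whitney_integral) measurable
  have "(\<lambda>w. \<integral>\<^sup>+ z. indicator (whitney \<alpha>1 \<alpha>2 w) z * 1 \<partial>lebesgue) \<in> borel_measurable borel"
    by (rule borel_measurable_whitney_integral) measurable
  then have [measurable]: "(\<lambda>w. emeasure lebesgue (whitney \<alpha>1 \<alpha>2 w)) \<in> borel_measurable borel"
    by (simp add: nn_integral_indicator)
  have "whitney_avg \<alpha>1 \<alpha>2 r g = (\<lambda>w. epow (emeasure lebesgue (whitney \<alpha>1 \<alpha>2 w)) (- 1 / enn2real r)
      * epow (\<integral>\<^sup>+ z. indicator (whitney \<alpha>1 \<alpha>2 w) z * epow (g z) (enn2real r) \<partial>lebesgue) (1 / enn2real r))"
    using False by (simp add: whitney_avg_def fun_eq_iff)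
  also have "\<dots> \<in> borel_measurable borel" by measurable
  finally show ?thesis .
qed

lemma whitney_avg_borel_measurable:
  fixes g :: "'a::euclidean_space \<times> real \<Rightarrow> ennreal"
  assumes "g \<in> borel_measurable lebesgue"
  shows "whitney_avg \<alpha>1 \<alpha>2 r g \<in> borel_measurable borel"
proof -
  obtain g' where g': "g' \<in> borel_measurable lborel" "AE x in lborel. g x = g' x"
    using completion_ex_borel_measurable[OF assms] by blast
  have "whitney_avg \<alpha>1 \<alpha>2 r g = whitney_avg \<alpha>1 \<alpha>2 r g'"
    by (rule whitney_avg_AE_cong) (rule AE_completion[OF g'(2)])
  with g'(1) show ?thesis
    by (simp add: whitney_avg_borel_measurable_borel measurable_lborel2)
qed

lemma whitney_avg_SUP:
  fixes gk :: "nat \<Rightarrow> 'a::euclidean_space \<times> real \<Rightarrow> ennreal"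
  assumes a1: "0 < \<alpha>1" and a2: "0 < \<alpha>2" and r: "0 < r"
    and meas: "\<And>k. gk k \<in> borel_measurable lebesgue"
    and ae: "AE z in lebesgue. z \<in> upper_half \<longrightarrow>
               (\<forall>k. gk k z \<le> gk (Suc k) z) \<and> g z = (SUP k. gk k z)"
  shows "whitney_avg \<alpha>1 \<alpha>2 r g w = (SUP k. whitney_avg \<alpha>1 \<alpha>2 r (gk k) w)"
proof (cases "r = \<infinity>")
  case True
  have "AE z in lebesgue. z \<in> whitney \<alpha>1 \<alpha>2 w \<longrightarrow> g z = (SUP k. gk k z)"
    using ae by eventually_elim (use whitney_subset_upper_half[OF a1 a2, of w] in blast)
  then show ?thesis using True by (simp add: whitney_avg_def esssup_on_SUP)
next
  case False
  define \<rho> where "\<rho> = enn2real r"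
  have \<rho>: "0 < \<rho>" using False r by (simp add: \<rho>_def enn2real_positive_iff top.not_eq_extremum)
  let ?W = "whitney \<alpha>1 \<alpha>2 w"
  have "(\<integral>\<^sup>+ z. indicator ?W z * epow (g z) \<rho> \<partial>lebesgue) =
        (\<integral>\<^sup>+ z. (SUP k. indicator ?W z * epow (gk k z) \<rho>) \<partial>lebesgue)"
  proof (rule nn_integral_cong_AE)
    show "AE z in lebesgue. indicator ?W z * epow (g z) \<rho> = (SUP k. indicator ?W z * epow (gk k z) \<rho>)"
      using ae
    proof eventually_elim
      case (elim z)
      then show ?case
        using whitney_subset_upper_half[OF a1 a2, of w]
        by (cases "z \<in> ?W") (auto simp: epow_SUP[OF \<rho>] image_comp)
    qed
  qed
  also have "\<dots> = (SUP k. \<integral>\<^sup>+ z. indicator ?W z * epow (gk k z) \<rho> \<partial>lebesgue)"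
  proof (rule nn_integral_monotone_convergence_SUP_AE)
    show "AE z in lebesgue. indicator ?W z * epow (gk k z) \<rho> \<le> indicator ?W z * epow (gk (Suc k) z) \<rho>"
      for k using ae by eventually_elim
        (use whitney_subset_upper_half[OF a1 a2, of w] in
          \<open>auto intro!: mult_left_mono epow_mono[OF \<rho>] simp: indicator_def\<close>)
    show "(\<lambda>z. indicator ?W z * epow (gk k z) \<rho>) \<in> borel_measurable lebesgue" for k
      using meas[of k] by measurable
  qed
  finally have "(\<integral>\<^sup>+ z. indicator ?W z * epow (g z) \<rho> \<partial>lebesgue) =
     (SUP k. \<integral>\<^sup>+ z. indicator ?W z * epow (gk k z) \<rho> \<partial>lebesgue)" .
  moreover have "0 < 1 / \<rho>" using \<rho> by simp
  ultimately show ?thesis using False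
    by (simp add: whitney_avg_def \<rho>_def[symmetric] epow_SUP SUP_mult_left_ennreal image_comp)
qed

text \<open>Monotonicity is the special case of the increasing sequence \<open>g, h, h, \<dots>\<close>.\<close>

lemma SUP_nat_if_zero:
  fixes a b :: "'b::complete_lattice"
  assumes "a \<le> b" shows "(SUP j::nat. if j = 0 then a else b) = b"
proof (rule antisym)
  show "(SUP j::nat. if j = 0 then a else b) \<le> b" using assms by (intro SUP_least) auto
  show "b \<le> (SUP j::nat. if j = 0 then a else b)" by (rule SUP_upper2[of 1]) auto
qed

lemma whitney_avg_mono:
  fixes g h :: "'a::euclidean_space \<times> real \<Rightarrow> ennreal"
  assumes a1: "0 < \<alpha>1" and a2: "0 < \<alpha>2" and r: "0 < r"
    and meas: "g \<in> borel_measurable lebesgue" "h \<in> borel_measurable lebesgue"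
    and ae: "AE z in lebesgue. z \<in> upper_half \<longrightarrow> g z \<le> h z"
  shows "whitney_avg \<alpha>1 \<alpha>2 r g w \<le> whitney_avg \<alpha>1 \<alpha>2 r h w"
proof -
  let ?S = "\<lambda>(j::nat) z. if j = 0 then g z else h z"
  have "whitney_avg \<alpha>1 \<alpha>2 r g w = whitney_avg \<alpha>1 \<alpha>2 r (?S 0) w" by simp
  also have "\<dots> \<le> (SUP j. whitney_avg \<alpha>1 \<alpha>2 r (?S j) w)" by (rule SUP_upper) simp
  also have "\<dots> = whitney_avg \<alpha>1 \<alpha>2 r h w"
  proof (rule whitney_avg_SUP[OF a1 a2 r, symmetric])
    show "?S k \<in> borel_measurable lebesgue" for k using meas by auto
    show "AE z in lebesgue. z \<in> upper_half \<longrightarrow> (\<forall>k. ?S k z \<le> ?S (Suc k) z) \<and> h z = (SUP k. ?S k z)"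
      using ae
    proof eventually_elim
      case (elim z)
      show ?case
      proof (intro impI conjI allI)
        assume "z \<in> upper_half"
        with elim have le: "g z \<le> h z" by blast
        show "?S k z \<le> ?S (Suc k) z" for k using le by simp
        show "h z = (SUP k. ?S k z)" by (simp only: SUP_nat_if_zero[OF le])
      qed
    qed
  qed
  finally show ?thesis .
qed

lemma tent_norm_SUP_finite:
  fixes G :: "nat \<Rightarrow> 'a::euclidean_space \<times> real \<Rightarrow> ennreal"
  assumes inc: "incseq G" and G: "\<And>k. G k \<in> borel_measurable borel"
    and p: "0 < p" "p \<noteq> \<infinity>" and q: "0 < q" "q \<noteq> \<infinity>"
  shows "tent_norm p q (\<lambda>z. SUP k. G k z) = (SUP k. tent_norm p q (G k))"
proof -
  define P where "P = enn2real p"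
  define Q where "Q = enn2real q"
  have P: "0 < P" and Q: "0 < Q" and PQ: "0 < P / Q"
    using p q by (simp_all add: P_def Q_def enn2real_positive_iff top.not_eq_extremum)
  define wt :: "'a \<times> real \<Rightarrow> ennreal" where "wt z = ennreal (1 / snd z ^ (DIM('a) + 1))" for z
  have wt[measurable]: "wt \<in> borel_measurable borel" unfolding wt_def by measurable
  have [measurable]: "G k \<in> borel_measurable lebesgue" "wt \<in> borel_measurable lebesgue"
    "cone x \<in> sets lebesgue" for k x
    using G by (auto intro: borel_measurable_imp_lebesgue sets_borel_imp_lebesgue cone_borel)
  define I where "I k x = (\<integral>\<^sup>+ z. indicator (cone x) z * epow (G k z) Q * wt z \<partial>lebesgue)" for k x
  have tn: "tent_norm p q H = epow (\<integral>\<^sup>+ x. epow (\<integral>\<^sup>+ z. indicator (cone x) z * epow (H z) Q * wt z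
      \<partial>lebesgue) (P / Q) \<partial>lebesgue) (1 / P)" for H
    using p q by (simp add: tent_norm_def P_def Q_def wt_def)
  have inner: "(\<integral>\<^sup>+ z. indicator (cone x) z * epow (SUP k. G k z) Q * wt z \<partial>lebesgue) = (SUP k. I k x)" for x
    using nn_integral_epow_SUP[OF inc _ _ Q, of lebesgue "\<lambda>z. indicator (cone x) z * wt z"]
    by (simp add: I_def mult_ac)
  have "I k \<in> borel_measurable borel" for k
  proof -
    have "(\<lambda>x. \<integral>\<^sup>+ z. indicator {(x, z). z \<in> cone x} (x, z) * (epow (G k z) Q * wt z) \<partial>lebesgue)
          \<in> borel_measurable borel"
      by (rule borel_measurable_nn_integral_section[OF cone_graph_borel]) (use G in measurable)
    moreover have "(\<lambda>x. \<integral>\<^sup>+ z. indicator {(x, z). z \<in> cone x} (x, z) * (epow (G k z) Q * wt z) \<partial>lebesgue)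
        = I k"
      by (auto simp: I_def fun_eq_iff indicator_def intro!: nn_integral_cong)
    ultimately show ?thesis by simp
  qed
  moreover have "incseq I"
    using inc unfolding I_def
    by (auto simp: incseq_def le_fun_def intro!: nn_integral_mono mult_right_mono mult_left_mono epow_mono[OF Q])
  ultimately have outer: "(\<integral>\<^sup>+ x. epow (SUP k. I k x) (P / Q) \<partial>lebesgue)
      = (SUP k. \<integral>\<^sup>+ x. epow (I k x) (P / Q) \<partial>lebesgue)"
    using nn_integral_epow_SUP[of I lebesgue "\<lambda>_. 1", OF _ borel_measurable_imp_lebesgue _ PQ] by simp
  have "tent_norm p q (\<lambda>z. SUP k. G k z) = epow (\<integral>\<^sup>+ x. epow (SUP k. I k x) (P / Q) \<partial>lebesgue) (1 / P)"
    unfolding tn inner ..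
  also have "\<dots> = (SUP k. epow (\<integral>\<^sup>+ x. epow (I k x) (P / Q) \<partial>lebesgue) (1 / P))"
    using P by (simp add: outer epow_SUP image_comp)
  also have "\<dots> = (SUP k. tent_norm p q (G k))"
    unfolding tn I_def ..
  finally show ?thesis .
qed

lemma tent_norm_SUP_Carleson:
  fixes G :: "nat \<Rightarrow> 'a::euclidean_space \<times> real \<Rightarrow> ennreal"
  assumes inc: "incseq G" and G: "\<And>k. G k \<in> borel_measurable borel"
    and q: "0 < q" "q \<noteq> \<infinity>"
  shows "tent_norm \<infinity> q (\<lambda>z. SUP k. G k z) = (SUP k. tent_norm \<infinity> q (G k))"
proof -
  define Q where "Q = enn2real q"
  have Q: "0 < Q" "0 < 1 / Q"
    using q by (simp_all add: Q_def enn2real_positive_iff top.not_eq_extremum)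
  define wt :: "'a \<times> real \<Rightarrow> ennreal" where "wt z = ennreal (1 / snd z)" for z
  have [measurable]: "wt \<in> borel_measurable lebesgue" unfolding wt_def
    by (intro borel_measurable_imp_lebesgue) measurable
  have [measurable]: "G k \<in> borel_measurable lebesgue" "tent c \<rho> \<in> sets lebesgue" for k c \<rho>
    using G by (auto intro: borel_measurable_imp_lebesgue sets_borel_imp_lebesgue tent_borel)
  define T where "T H c \<rho> = epow (emeasure lebesgue (ball c \<rho>)) (- 1 / Q)
      * epow (\<integral>\<^sup>+ z. indicator (tent c \<rho>) z * epow (H z) Q * wt z \<partial>lebesgue) (1 / Q)" for H c \<rho>
  have tn: "tent_norm \<infinity> q H = (SUP x. SUP c. SUP \<rho> \<in> {\<rho>. 0 < \<rho> \<and> x \<in> ball c \<rho>}. T H c \<rho>)" for H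
    using q by (simp add: tent_norm_def Q_def wt_def T_def)
  have T_SUP: "T (\<lambda>z. SUP k. G k z) c \<rho> = (SUP k. T (G k) c \<rho>)" for c \<rho>
    using nn_integral_epow_SUP[OF inc _ _ Q(1), of lebesgue "\<lambda>z. indicator (tent c \<rho>) z * wt z"] Q(2)
    by (simp add: T_def mult_ac epow_SUP SUP_mult_left_ennreal image_comp)
  show ?thesis
    unfolding tn T_SUP
    by (rule antisym) (intro SUP_least; rule SUP_upper2[of _ UNIV]; auto intro: SUP_upper2)+
qed

lemma tent_norm_SUP_nontangential:
  fixes G :: "nat \<Rightarrow> 'a::euclidean_space \<times> real \<Rightarrow> ennreal"
  assumes inc: "incseq G" and p: "0 < p" "p \<noteq> \<infinity>"
  shows "tent_norm p \<infinity> (\<lambda>z. SUP k. G k z) = (SUP k. tent_norm p \<infinity> (G k))"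
proof -
  define P where "P = enn2real p"
  have P: "0 < P" "0 < 1 / P"
    using p by (simp_all add: P_def enn2real_positive_iff top.not_eq_extremum)
  define S where "S k x = (SUP z\<in>cone x. G k z)" for k x
  have "incseq S"
    using inc unfolding S_def by (auto simp: incseq_def le_fun_def intro!: SUP_mono')
  moreover have "S k \<in> borel_measurable lebesgue" for k
    unfolding S_def by (intro borel_measurable_imp_lebesgue borel_measurable_SUP_cone)
  ultimately have outer: "(\<integral>\<^sup>+ x. epow (SUP k. S k x) P \<partial>lebesgue)
      = (SUP k. \<integral>\<^sup>+ x. epow (S k x) P \<partial>lebesgue)"
    using nn_integral_epow_SUP[of S lebesgue "\<lambda>_. 1", OF _ _ _ P(1)] by simp
  have "tent_norm p \<infinity> (\<lambda>z. SUP k. G k z) = epow (\<integral>\<^sup>+ x. epow (SUP k. S k x) P \<partial>lebesgue) (1 / P)"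
    using p by (simp add: tent_norm_def P_def[symmetric] S_def SUP_commute[of _ "cone _"])
  also have "\<dots> = (SUP k. epow (\<integral>\<^sup>+ x. epow (S k x) P \<partial>lebesgue) (1 / P))"
    by (simp add: outer epow_SUP[OF P(2)] image_comp)
  also have "\<dots> = (SUP k. tent_norm p \<infinity> (G k))"
    using p by (simp add: tent_norm_def P_def[symmetric] S_def)
  finally show ?thesis .
qed

lemma tent_norm_SUP:
  fixes G :: "nat \<Rightarrow> 'a::euclidean_space \<times> real \<Rightarrow> ennreal"
  assumes "incseq G" "\<And>k. G k \<in> borel_measurable borel" "0 < p" "0 < q"
  shows "tent_norm p q (\<lambda>z. SUP k. G k z) = (SUP k. tent_norm p q (G k))"
proof -
  consider "p \<noteq> \<infinity>" "q \<noteq> \<infinity>" | "p = \<infinity>" "q \<noteq> \<infinity>" | "p \<noteq> \<infinity>" "q = \<infinity>" | "p = \<infinity>" "q = \<infinity>"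
    by blast
  then show ?thesis
  proof cases
    case 1
    then show ?thesis using assms by (intro tent_norm_SUP_finite) auto
  next
    case 2
    then show ?thesis using assms tent_norm_SUP_Carleson[of G q] by simp
  next
    case 3
    then show ?thesis using assms tent_norm_SUP_nontangential[of G p] by simp
  next
    case 4
    then show ?thesis by (simp add: tent_norm_def esssup_on_SUP)
  qed
qed

lemma tent_norm_mono:
  fixes G H :: "'a::euclidean_space \<times> real \<Rightarrow> ennreal"
  assumes "G \<le> H" "G \<in> borel_measurable borel" "H \<in> borel_measurable borel" "0 < p" "0 < q"
  shows "tent_norm p q G \<le> tent_norm p q H"
proof -
  let ?S = "\<lambda>(j::nat) z. if j = 0 then G z else H z"
  have "incseq ?S" using assms(1) by (auto simp: incseq_def le_fun_def)
  then have SUP_eq: "tent_norm p q (\<lambda>z. SUP j. ?S j z) = (SUP j. tent_norm p q (?S j))"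
    using assms(2-5) by (intro tent_norm_SUP) auto
  have H_eq: "(\<lambda>z. SUP j. ?S j z) = H"
    using assms(1) by (simp only: fun_eq_iff SUP_nat_if_zero le_fun_def) simp
  have "tent_norm p q G = tent_norm p q (?S 0)" by simp
  also have "\<dots> \<le> (SUP j. tent_norm p q (?S j))" by (rule SUP_upper) simp
  also have "\<dots> = tent_norm p q H" by (simp only: SUP_eq[symmetric] H_eq)
  finally show ?thesis .
qed

lemma tent_norm_whitney_avg_SUP:
  fixes gk :: "nat \<Rightarrow> 'a::euclidean_space \<times> real \<Rightarrow> ennreal"
  assumes a: "0 < \<alpha>1" "0 < \<alpha>2" and pqr: "0 < p" "0 < q" "0 < r"
    and meas: "\<And>k. gk k \<in> borel_measurable lebesgue" "g \<in> borel_measurable lebesgue"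
    and ae: "AE z in lebesgue. z \<in> upper_half \<longrightarrow>
               (\<forall>k. gk k z \<le> gk (Suc k) z) \<and> g z = (SUP k. gk k z)"
  shows "tent_norm p q (whitney_avg \<alpha>1 \<alpha>2 r g) = (SUP k. tent_norm p q (whitney_avg \<alpha>1 \<alpha>2 r (gk k)))"
    and "incseq (\<lambda>k. tent_norm p q (whitney_avg \<alpha>1 \<alpha>2 r (gk k)))"
proof -
  let ?G = "\<lambda>k. whitney_avg \<alpha>1 \<alpha>2 r (gk k)"
  have G_meas: "?G k \<in> borel_measurable borel" for k
    using meas(1) by (rule whitney_avg_borel_measurable)
  have G_inc: "incseq ?G"
    unfolding incseq_Suc_iff le_fun_def
  proof (intro allI whitney_avg_mono[OF a pqr(3) meas(1) meas(1)])
    show "AE z in lebesgue. z \<in> upper_half \<longrightarrow> gk k z \<le> gk (Suc k) z" for k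
      using ae by eventually_elim blast
  qed
  have "whitney_avg \<alpha>1 \<alpha>2 r g = (\<lambda>w. SUP k. ?G k w)"
    using whitney_avg_SUP[OF a pqr(3) meas(1) ae] by (simp add: fun_eq_iff)
  then show "tent_norm p q (whitney_avg \<alpha>1 \<alpha>2 r g) = (SUP k. tent_norm p q (?G k))"
    using tent_norm_SUP[OF G_inc G_meas pqr(1,2)] by simp
  show "incseq (\<lambda>k. tent_norm p q (?G k))"
    using G_inc G_meas pqr by (auto simp: incseq_def intro!: tent_norm_mono)
qed

definition weighted_modulus ::
    "real \<Rightarrow> ('a::euclidean_space \<times> real \<Rightarrow> complex) \<Rightarrow> 'a \<times> real \<Rightarrow> ennreal"
  where "weighted_modulus \<beta> f = (\<lambda>(z, s). ennreal (cmod (f (z, s)) * s powr (- \<beta>)))"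

lemma tpr_norm_eq_tent_norm:
  "tpr_norm \<alpha>1 \<alpha>2 p q r \<beta> f = tent_norm p q (whitney_avg \<alpha>1 \<alpha>2 r (weighted_modulus \<beta> f))"
  by (simp add: tpr_norm_def weighted_modulus_def)

lemma weighted_modulus_apply: "weighted_modulus \<beta> f w = ennreal (cmod (f w) * snd w powr (- \<beta>))"
  by (simp add: weighted_modulus_def split: prod.split)

lemma weighted_modulus_measurable:
  fixes f :: "'a::euclidean_space \<times> real \<Rightarrow> complex"
  assumes [measurable]: "f \<in> borel_measurable lebesgue"
  shows "weighted_modulus \<beta> f \<in> borel_measurable lebesgue"
proof -
  have [measurable]: "(snd :: 'a \<times> real \<Rightarrow> real) \<in> borel_measurable lebesgue"
    by (intro borel_measurable_imp_lebesgue snd_borel)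
  show ?thesis unfolding weighted_modulus_apply[abs_def] by measurable
qed

lemma weighted_modulus_SUP:
  assumes "\<forall>k. Im (fk k w) = 0 \<and> 0 \<le> Re (fk k w) \<and> Re (fk k w) \<le> Re (fk (Suc k) w)"
    and lim: "(\<lambda>k. fk k w) \<longlonglongrightarrow> f w"
  shows "(\<forall>k. weighted_modulus \<beta> (fk k) w \<le> weighted_modulus \<beta> (fk (Suc k)) w)
         \<and> weighted_modulus \<beta> f w = (SUP k. weighted_modulus \<beta> (fk k) w)"
proof -
  have mono: "weighted_modulus \<beta> (fk k) w \<le> weighted_modulus \<beta> (fk (Suc k)) w" for k
    using assms(1) by (auto simp: weighted_modulus_apply cmod_eq_Re intro!: ennreal_leI mult_right_mono)
  then have "(\<lambda>k. weighted_modulus \<beta> (fk k) w) \<longlonglongrightarrow> (SUP k. weighted_modulus \<beta> (fk k) w)"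
    by (intro LIMSEQ_SUP) (simp add: incseq_Suc_iff)
  moreover have "(\<lambda>k. weighted_modulus \<beta> (fk k) w) \<longlonglongrightarrow> weighted_modulus \<beta> f w"
    unfolding weighted_modulus_apply by (intro tendsto_ennrealI tendsto_mult tendsto_const tendsto_norm lim)
  ultimately show ?thesis using mono LIMSEQ_unique by blast
qed

theorem lemma4p2:
  fixes f :: "'a::euclidean_space \<times> real \<Rightarrow> complex"
    and fk :: "nat \<Rightarrow> 'a \<times> real \<Rightarrow> complex"
    and p q r :: ennreal and \<beta> \<alpha>1 \<alpha>2 :: real
  assumes "0 < \<alpha>1" and "\<alpha>1 < 1 / \<alpha>2" and "1 / \<alpha>2 < 1"
    and "0 < p" and "0 < q" and "0 < r"
    and "\<forall>k. fk k \<in> tpr_space \<alpha>1 \<alpha>2 p q r \<beta>"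
    and "(SUP k. tpr_norm \<alpha>1 \<alpha>2 p q r \<beta> (fk k)) < \<infinity>"
    and "f \<in> borel_measurable lebesgue"
    and "AE z in lebesgue. z \<in> upper_half \<longrightarrow>
           (\<forall>k. Im (fk k z) = 0 \<and> 0 \<le> Re (fk k z) \<and> Re (fk k z) \<le> Re (fk (Suc k) z))
           \<and> (\<lambda>k. fk k z) \<longlonglongrightarrow> f z"
  shows "f \<in> tpr_space \<alpha>1 \<alpha>2 p q r \<beta>
         \<and> (\<lambda>k. tpr_norm \<alpha>1 \<alpha>2 p q r \<beta> (fk k)) \<longlonglongrightarrow> tpr_norm \<alpha>1 \<alpha>2 p q r \<beta> f"
proof -
  have \<alpha>2: "0 < \<alpha>2" using assms(1,2) by (smt (verit) divide_le_0_1_iff)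
  have meas: "\<And>k. weighted_modulus \<beta> (fk k) \<in> borel_measurable lebesgue"
    using assms(7) by (simp add: tpr_space_def weighted_modulus_measurable)
  have ae: "AE z in lebesgue. z \<in> upper_half \<longrightarrow>
      (\<forall>k. weighted_modulus \<beta> (fk k) z \<le> weighted_modulus \<beta> (fk (Suc k)) z)
      \<and> weighted_modulus \<beta> f z = (SUP k. weighted_modulus \<beta> (fk k) z)"
    using assms(10) by eventually_elim (metis weighted_modulus_SUP)
  note limit = tent_norm_whitney_avg_SUP[OF assms(1) \<alpha>2 assms(4-6) meas
      weighted_modulus_measurable[OF assms(9)] ae, folded tpr_norm_eq_tent_norm]
  show ?thesis
    using assms(8,9) LIMSEQ_SUP[OF limit(2)] by (simp add: tpr_space_def limit(1))
qed
end
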